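(* Let $G$ be an $(n,d,\lambda)$-graph, $P$ a path in $G$ and $A$ a subpath of $P$. If $|A|\ge 10\lambda n/d$, then there is a $P$-clean subset $A'\subseteq A$ with $|A'|\ge 0.9|A|$.
   Context: An $(n,d,\lambda)$-graph is an $n$-vertex $d$-regular graph whose second largest eigenvalue in absolute value is at most $\lambda$. For a path $P=(v_1,\dots,v_l)$ and $X\subseteq V(P)$, $\mathrm{int}_P(X)$ is the set of vertices $v_i\in X$ with $1<i<l$ and $v_{i-1},v_{i+1}\in X$. A subset $S\subseteq V(P)$ is $(P,\delta)$-clean if every $v\in S$ satisfies $|N(v)\cap\mathrm{int}_P(S)|\ge\delta$, where $N(v)$ is the neighbourhood in $G$; $S$ is $P$-clean if it is $(P,d|S|/(4n))$-clean. *)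

theory Defs
  imports "Jordan_Normal_Form.Char_Poly"
begin

definition simple_graph :: "nat \<Rightarrow> (nat \<Rightarrow> nat \<Rightarrow> bool) \<Rightarrow> bool" where
  "simple_graph n E \<longleftrightarrow>
     (\<forall>u v. E u v \<longrightarrow> u < n \<and> v < n) \<and> (\<forall>u v. E u v \<longrightarrow> E v u) \<and> (\<forall>u. \<not> E u u)"

definition nbhd :: "(nat \<Rightarrow> nat \<Rightarrow> bool) \<Rightarrow> nat \<Rightarrow> nat set" where
  "nbhd E v = {u. E v u}"

definition regular :: "nat \<Rightarrow> (nat \<Rightarrow> nat \<Rightarrow> bool) \<Rightarrow> nat \<Rightarrow> bool" where
  "regular n E d \<longleftrightarrow> (\<forall>v<n. card (nbhd E v) = d)"

definition adj_matrix :: "nat \<Rightarrow> (nat \<Rightarrow> nat \<Rightarrow> bool) \<Rightarrow> real mat" where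
  "adj_matrix n E = mat n n (\<lambda>(i, j). if E i j then 1 else 0)"

definition eigenvalue_list :: "real mat \<Rightarrow> real list \<Rightarrow> bool" where
  "eigenvalue_list A es \<longleftrightarrow>
     char_poly A = (\<Prod>e\<leftarrow>es. [:- e, 1:]) \<and> sorted_wrt (\<ge>) es"

text \<open>(n,d,lambda)-graph: n vertices, d-regular, and every eigenvalue other than
  the largest one (lambda_2, ..., lambda_n) has absolute value at most lambda.\<close>
definition ndl_graph :: "nat \<Rightarrow> nat \<Rightarrow> real \<Rightarrow> (nat \<Rightarrow> nat \<Rightarrow> bool) \<Rightarrow> bool" where
  "ndl_graph n d lam E \<longleftrightarrow> simple_graph n E \<and> regular n E d \<and>
     (\<exists>es. eigenvalue_list (adj_matrix n E) es \<and> (\<forall>i. 1 \<le> i \<and> i < length es \<longrightarrow> \<bar>es ! i\<bar> \<le> lam))"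

definition is_path :: "nat \<Rightarrow> (nat \<Rightarrow> nat \<Rightarrow> bool) \<Rightarrow> nat list \<Rightarrow> bool" where
  "is_path n E P \<longleftrightarrow> P \<noteq> [] \<and> distinct P \<and> set P \<subseteq> {..<n} \<and>
     (\<forall>i. i + 1 < length P \<longrightarrow> E (P ! i) (P ! (i + 1)))"

definition subpath :: "nat list \<Rightarrow> nat list \<Rightarrow> bool" where
  "subpath A P \<longleftrightarrow> A \<noteq> [] \<and> (\<exists>xs ys. P = xs @ A @ ys)"

text \<open>int_P(X), with 0-based indices: vertices P!i of X with 0 < i < length P - 1
  whose both path-neighbours P!(i-1), P!(i+1) are in X.\<close>
definition int_path :: "nat list \<Rightarrow> nat set \<Rightarrow> nat set" where
  "int_path P X = {P ! i | i. 0 < i \<and> i + 1 < length P \<and> P ! i \<in> X \<and>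
                               P ! (i - 1) \<in> X \<and> P ! (i + 1) \<in> X}"

definition clean_delta :: "(nat \<Rightarrow> nat \<Rightarrow> bool) \<Rightarrow> nat list \<Rightarrow> real \<Rightarrow> nat set \<Rightarrow> bool" where
  "clean_delta E P \<delta> S \<longleftrightarrow> S \<subseteq> set P \<and>
     (\<forall>v\<in>S. real (card (nbhd E v \<inter> int_path P S)) \<ge> \<delta>)"

definition clean :: "nat \<Rightarrow> nat \<Rightarrow> (nat \<Rightarrow> nat \<Rightarrow> bool) \<Rightarrow> nat list \<Rightarrow> nat set \<Rightarrow> bool" where
  "clean n d E P S \<longleftrightarrow> clean_delta E P (real d * real (card S) / (4 * real n)) S"

end

(*
  Delete, one at a time, vertices of the current set S \<subseteq> A having fewer than d |S| / (4 n)
  neighbours in int_P(S). If fewer than |A| / 10 vertices get deleted, the remaining set is P-clean.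
  Otherwise stop when k, roughly |A| / 10, vertices R have been deleted: each of them has fewer than
  d |A| / (4 n) neighbours in T = int_P(S), while |T| \<ge> |A| - 3 k - 2, as a deleted vertex spoils
  at most three interior positions. For |A| \<ge> 39 this contradicts the expander mixing lemma
  |e(R, T) - d |R| |T| / n| \<le> lam sqrt(|R| |T|), since lam \<le> d |A| / (10 n). For shorter A the
  trace bound d (n - d) \<le> lam^2 (n - 1) gives n - d < |A|^2 / 100, so every vertex of R already
  sees almost all of T.

  The eigenvalue bound behind the mixing lemma is derived from traces of powers of the adjacency
  matrix, without the spectral theorem.
*)
theory Submission
  imports Defs "Jordan_Normal_Form.Schur_Decomposition" "HOL-Analysis.Convex"
begin

section \<open>Traces of matrix powers\<close>

definition trace_mat :: "'a::comm_semiring_0 mat \<Rightarrow> 'a" where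
  "trace_mat M = (\<Sum>i<dim_row M. M $$ (i, i))"

lemma trace_mat_mult_commute:
  fixes X Y :: "'a::comm_semiring_0 mat"
  assumes X: "X \<in> carrier_mat n n" and Y: "Y \<in> carrier_mat n n"
  shows "trace_mat (X * Y) = trace_mat (Y * X)"
proof -
  have "trace_mat (X * Y) = (\<Sum>i<n. \<Sum>j<n. X $$ (i, j) * Y $$ (j, i))"
    using X Y by (simp add: trace_mat_def scalar_prod_def atLeast0LessThan)
  also have "\<dots> = (\<Sum>j<n. \<Sum>i<n. Y $$ (j, i) * X $$ (i, j))"
    by (subst sum.swap) (simp add: mult.commute)
  also have "\<dots> = trace_mat (Y * X)"
    using X Y by (simp add: trace_mat_def scalar_prod_def atLeast0LessThan)
  finally show ?thesis .
qed

lemma upper_triangular_mult: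
  fixes X Y :: "'a::semiring_0 mat"
  assumes X: "X \<in> carrier_mat n n" and Y: "Y \<in> carrier_mat n n"
    and "upper_triangular X" and "upper_triangular Y"
  shows "upper_triangular (X * Y)"
proof
  fix i j assume "j < i" and i: "i < dim_row (X * Y)"
  have "X $$ (i, l) * Y $$ (l, j) = 0" if "l < n" for l
  proof (cases "l < i")
    case True
    then show ?thesis using assms(1,3) i by (simp add: upper_triangularD)
  next
    case False
    then show ?thesis using assms(2,4) \<open>j < i\<close> that by (simp add: upper_triangularD)
  qed
  then show "(X * Y) $$ (i, j) = 0"
    using X Y i \<open>j < i\<close> by (simp add: scalar_prod_def)
qed

lemma diag_upper_triangular_mult:
  fixes X Y :: "'a::semiring_0 mat"
  assumes X: "X \<in> carrier_mat n n" and Y: "Y \<in> carrier_mat n n"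
    and "upper_triangular X" and "upper_triangular Y" and i: "i < n"
  shows "(X * Y) $$ (i, i) = X $$ (i, i) * Y $$ (i, i)"
proof -
  have "X $$ (i, l) * Y $$ (l, i) = (if l = i then X $$ (i, i) * Y $$ (i, i) else 0)" if "l < n" for l
    using assms that by (cases l i rule: linorder_cases) (auto dest: upper_triangularD)
  then have "(\<Sum>l = 0..<n. X $$ (i, l) * Y $$ (l, i))
      = (\<Sum>l = 0..<n. if l = i then X $$ (i, i) * Y $$ (i, i) else 0)"
    by (intro sum.cong) auto
  then show ?thesis
    using X Y i by (simp add: scalar_prod_def)
qed

lemma upper_triangular_pow:
  fixes A :: "'a::semiring_1 mat"
  assumes A: "A \<in> carrier_mat n n" and "upper_triangular A"
  shows "upper_triangular (A ^\<^sub>m k)"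
  by (induction k) (use assms in \<open>auto intro: upper_triangular_mult[of _ n]\<close>)

lemma diag_upper_triangular_pow:
  fixes A :: "'a::semiring_1 mat"
  assumes A: "A \<in> carrier_mat n n" and "upper_triangular A" and "i < n"
  shows "(A ^\<^sub>m k) $$ (i, i) = (A $$ (i, i)) ^ k"
proof (induction k)
  case (Suc k)
  have "(A ^\<^sub>m Suc k) $$ (i, i) = (A ^\<^sub>m k * A) $$ (i, i)"
    by simp
  also have "\<dots> = (A ^\<^sub>m k) $$ (i, i) * A $$ (i, i)"
    by (rule diag_upper_triangular_mult[of _ n])
      (use assms upper_triangular_pow[OF assms(1,2)] in auto)
  finally show ?case
    using Suc by (simp add: power_commutes)
qed (use assms in simp)

lemma trace_pow_char_poly_roots:
  fixes A :: "'a::conjugatable_ordered_field mat"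
  assumes A: "A \<in> carrier_mat n n" and char_poly: "char_poly A = (\<Prod>e\<leftarrow>es. [:- e, 1:])"
  shows "length es = n" and "trace_mat (A ^\<^sub>m k) = (\<Sum>i<n. (es ! i) ^ k)"
proof -
  obtain B P Q where schur: "schur_decomposition A es = (B, P, Q)"
    by (cases "schur_decomposition A es") auto
  from schur_decomposition[OF A char_poly schur]
  have sim: "similar_mat_wit A B P Q" and B: "upper_triangular B" and diag: "diag_mat B = es"
    by auto
  note wit = similar_mat_witD2[OF A sim]
  show "length es = n"
    using diag wit(5) by (auto simp: diag_mat_def)
  have es: "es ! i = B $$ (i, i)" if "i < n" for i
    using diag wit(5) that by (auto simp: diag_mat_def)
  have Bk: "B ^\<^sub>m k \<in> carrier_mat n n"
    using wit(5) by simp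
  have "trace_mat (A ^\<^sub>m k) = trace_mat (P * B ^\<^sub>m k * Q)"
    by (simp add: similar_mat_wit_pow_id[OF sim])
  also have "\<dots> = trace_mat (Q * (P * B ^\<^sub>m k))"
    using wit Bk by (intro trace_mat_mult_commute[of _ n]) auto
  also have "Q * (P * B ^\<^sub>m k) = (Q * P) * B ^\<^sub>m k"
    by (rule assoc_mult_mat[symmetric]) (use wit Bk in auto)
  also have "\<dots> = B ^\<^sub>m k"
    using wit(2) left_mult_one_mat[OF Bk] by simp
  also have "trace_mat (B ^\<^sub>m k) = (\<Sum>i<n. (es ! i) ^ k)"
    using diag_upper_triangular_pow[OF wit(5) B] wit(5) es by (simp add: trace_mat_def)
  finally show "trace_mat (A ^\<^sub>m k) = (\<Sum>i<n. (es ! i) ^ k)" .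
qed

section \<open>Log-convex sequences\<close>

lemma log_convex_ratio_mono:
  fixes N :: "nat \<Rightarrow> real"
  assumes nonneg: "\<And>j. 0 \<le> N j" and log_convex: "\<And>j. (N (Suc j))\<^sup>2 \<le> N j * N (Suc (Suc j))"
  shows "N j * N 1 \<le> N (Suc j) * N 0"
proof (induction j)
  case (Suc j)
  show ?case
  proof (cases "N j = 0")
    case True
    then have "N (Suc j) = 0"
      using log_convex[of j] by simp
    then show ?thesis
      using nonneg by simp
  next
    case False
    then have pos: "0 < N j"
      using nonneg[of j] by simp
    have "N j * (N (Suc j) * N 1) = N (Suc j) * (N j * N 1)"
      by (simp add: mult_ac)
    also have "\<dots> \<le> N (Suc j) * (N (Suc j) * N 0)"
      using Suc nonneg by (intro mult_left_mono) auto
    also have "\<dots> = (N (Suc j))\<^sup>2 * N 0"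
      by (simp add: power2_eq_square mult_ac)
    also have "\<dots> \<le> (N j * N (Suc (Suc j))) * N 0"
      using log_convex[of j] nonneg by (intro mult_right_mono) auto
    also have "\<dots> = N j * (N (Suc (Suc j)) * N 0)"
      by (simp add: mult_ac)
    finally show ?thesis
      using pos by simp
  qed
qed (simp add: mult.commute)

lemma log_convex_pow_le:
  fixes N :: "nat \<Rightarrow> real"
  assumes nonneg: "\<And>j. 0 \<le> N j" and log_convex: "\<And>j. (N (Suc j))\<^sup>2 \<le> N j * N (Suc (Suc j))"
  shows "N 1 ^ j * N 0 \<le> N j * N 0 ^ j"
proof (induction j)
  case (Suc j)
  have "N 1 ^ Suc j * N 0 = N 1 * (N 1 ^ j * N 0)"
    by simp
  also have "\<dots> \<le> N 1 * (N j * N 0 ^ j)"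
    using Suc nonneg by (intro mult_left_mono) auto
  also have "\<dots> = (N j * N 1) * N 0 ^ j"
    by (simp add: mult_ac)
  also have "\<dots> \<le> (N (Suc j) * N 0) * N 0 ^ j"
    using log_convex_ratio_mono[of N, OF nonneg log_convex, of j] nonneg by (intro mult_right_mono) auto
  also have "\<dots> = N (Suc j) * N 0 ^ Suc j"
    by (simp add: mult_ac)
  finally show ?case .
qed simp

lemma le_of_pow_le_const_mult_pow:
  fixes x y C :: real
  assumes "0 \<le> y" and pow_le: "\<And>j. x ^ j \<le> C * y ^ j"
  shows "x \<le> y"
proof (rule ccontr)
  assume "\<not> x \<le> y"
  then have "y < x"
    by simp
  show False
  proof (cases "y = 0")
    case True
    then show False
      using pow_le[of 1] \<open>y < x\<close> by simp
  next
    case False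
    then have "0 < y"
      using assms(1) by simp
    then have "1 < x / y"
      using \<open>y < x\<close> by simp
    then obtain j where j: "C < (x / y) ^ j"
      using real_arch_pow by blast
    have "(x / y) ^ j \<le> C"
      using pow_le[of j] \<open>0 < y\<close> by (simp add: power_divide divide_le_eq)
    with j show False
      by simp
  qed
qed

lemma log_convex_geometric_bound:
  fixes N :: "nat \<Rightarrow> real" and q C :: real
  assumes nonneg: "\<And>j. 0 \<le> N j" and log_convex: "\<And>j. (N (Suc j))\<^sup>2 \<le> N j * N (Suc (Suc j))"
    and "0 \<le> q" and bound: "\<And>j. N j \<le> C * q ^ j * N 0"
  shows "N 1 \<le> q * N 0"
proof (cases "N 0 = 0")
  case True
  then show ?thesis
    using bound[of 1] by simp
next
  case False
  then have N0: "0 < N 0"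
    using nonneg[of 0] by simp
  have pow_le: "N 1 ^ j \<le> C * (q * N 0) ^ j" for j
  proof -
    have "N 1 ^ j * N 0 \<le> N j * N 0 ^ j"
      by (rule log_convex_pow_le[of N, OF nonneg log_convex])
    also have "\<dots> \<le> (C * q ^ j * N 0) * N 0 ^ j"
      using bound[of j] N0 by (intro mult_right_mono) auto
    also have "\<dots> = (C * (q * N 0) ^ j) * N 0"
      by (simp add: power_mult_distrib mult_ac)
    finally show ?thesis
      using N0 by simp
  qed
  show ?thesis
    by (rule le_of_pow_le_const_mult_pow[OF _ pow_le]) (use \<open>0 \<le> q\<close> N0 in simp)
qed

section \<open>The adjacency operator\<close>

text \<open>Vectors of R^n are modelled as functions on nat whose values at i \<ge> n are ignored.\<close>
definition dot :: "nat \<Rightarrow> (nat \<Rightarrow> real) \<Rightarrow> (nat \<Rightarrow> real) \<Rightarrow> real" where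
  "dot n x y = (\<Sum>i<n. x i * y i)"

definition adj_op :: "nat \<Rightarrow> (nat \<Rightarrow> nat \<Rightarrow> bool) \<Rightarrow> (nat \<Rightarrow> real) \<Rightarrow> nat \<Rightarrow> real" where
  "adj_op n E x i = (\<Sum>j<n. of_bool (E i j) * x j)"

lemma dot_self_nonneg: "0 \<le> dot n x x"
  by (simp add: dot_def sum_nonneg)

lemma dot_Cauchy_Schwarz: "(dot n x y)\<^sup>2 \<le> dot n x x * dot n y y"
  using Cauchy_Schwarz_ineq_sum[of x y "{..<n}"] by (simp add: dot_def power2_eq_square)

lemma dot_unit_right: "j < n \<Longrightarrow> dot n x (\<lambda>l. of_bool (l = j)) = x j"
  by (simp add: dot_def)

lemma dot_unit_left: "j < n \<Longrightarrow> dot n (\<lambda>l. of_bool (l = j)) x = x j"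
  by (simp add: dot_def)

lemma adj_op_symmetric:
  assumes "simple_graph n E"
  shows "dot n (adj_op n E x) y = dot n x (adj_op n E y)"
proof -
  have sym: "E i j = E j i" for i j
    using assms unfolding simple_graph_def by blast
  have "dot n (adj_op n E x) y = (\<Sum>i<n. \<Sum>j<n. of_bool (E i j) * x j * y i)"
    by (simp add: dot_def adj_op_def sum_distrib_right del: sum_of_bool_mult_eq)
  also have "\<dots> = (\<Sum>j<n. \<Sum>i<n. x j * (of_bool (E j i) * y i))"
    by (subst sum.swap) (simp add: sym mult_ac del: sum_of_bool_mult_eq sum_mult_of_bool_eq)
  also have "\<dots> = dot n x (adj_op n E y)"
    by (simp add: dot_def adj_op_def sum_distrib_left del: sum_of_bool_mult_eq)
  finally show ?thesis .
qed

lemma adj_op_pow_symmetric: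
  assumes "simple_graph n E"
  shows "dot n ((adj_op n E ^^ k) x) y = dot n x ((adj_op n E ^^ k) y)"
proof (induction k arbitrary: x y)
  case (Suc k)
  have "dot n ((adj_op n E ^^ Suc k) x) y = dot n ((adj_op n E ^^ k) x) (adj_op n E y)"
    by (simp add: adj_op_symmetric[OF assms])
  also have "\<dots> = dot n x ((adj_op n E ^^ Suc k) y)"
    by (simp add: Suc funpow_swap1)
  finally show ?case .
qed simp

lemma adj_matrix_carrier: "adj_matrix n E \<in> carrier_mat n n"
  by (simp add: adj_matrix_def)

lemma adj_op_pow_eq_mat:
  assumes "i < n"
  shows "(adj_op n E ^^ k) x i = (\<Sum>j<n. (adj_matrix n E ^\<^sub>m k) $$ (i, j) * x j)"
  using assms
proof (induction k arbitrary: x)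
  case 0
  then show ?case
    by (simp add: adj_matrix_def if_distrib[of "\<lambda>c. c * _"] cong: if_cong)
next
  case (Suc k)
  let ?W = "adj_matrix n E ^\<^sub>m k"
  have W: "?W \<in> carrier_mat n n"
    using adj_matrix_carrier by simp
  have "(adj_op n E ^^ Suc k) x i = (adj_op n E ^^ k) (adj_op n E x) i"
    by (simp add: funpow_swap1)
  also have "\<dots> = (\<Sum>j<n. ?W $$ (i, j) * (\<Sum>l<n. of_bool (E j l) * x l))"
    by (simp add: Suc adj_op_def del: sum_of_bool_mult_eq)
  also have "\<dots> = (\<Sum>l<n. (\<Sum>j<n. ?W $$ (i, j) * of_bool (E j l)) * x l)"
    by (simp add: sum_distrib_left sum_distrib_right mult.assoc
        del: sum_of_bool_mult_eq sum_mult_of_bool_eq) (rule sum.swap)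
  also have "\<dots> = (\<Sum>l<n. (?W * adj_matrix n E) $$ (i, l) * x l)"
    using W Suc.prems
    by (intro sum.cong refl)
      (simp add: scalar_prod_def adj_matrix_def atLeast0LessThan of_bool_def)
  finally show ?case
    by simp
qed

lemma adj_matrix_pow_entry:
  assumes "i < n" and "j < n"
  shows "(adj_matrix n E ^\<^sub>m k) $$ (i, j) = (adj_op n E ^^ k) (\<lambda>l. of_bool (l = j)) i"
  using assms by (simp add: adj_op_pow_eq_mat)

lemma adj_matrix_pow_symmetric:
  assumes "simple_graph n E" and "i < n" and "j < n"
  shows "(adj_matrix n E ^\<^sub>m k) $$ (i, j) = (adj_matrix n E ^\<^sub>m k) $$ (j, i)"
  using adj_op_pow_symmetric[OF assms(1), of k "\<lambda>l. of_bool (l = j)" "\<lambda>l. of_bool (l = i)"] assms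
  by (simp add: adj_matrix_pow_entry dot_unit_right dot_unit_left)

lemma trace_adj_matrix_pow_double:
  assumes "simple_graph n E"
  shows "trace_mat (adj_matrix n E ^\<^sub>m (k + k))
    = (\<Sum>i<n. \<Sum>j<n. ((adj_matrix n E ^\<^sub>m k) $$ (i, j))\<^sup>2)"
proof -
  have "(adj_matrix n E ^\<^sub>m (k + k)) $$ (i, i) = (\<Sum>j<n. ((adj_matrix n E ^\<^sub>m k) $$ (i, j))\<^sup>2)"
    if i: "i < n" for i
  proof -
    have "(adj_matrix n E ^\<^sub>m (k + k)) $$ (i, i)
        = (adj_op n E ^^ k) ((adj_op n E ^^ k) (\<lambda>l. of_bool (l = i))) i"
      using i by (simp add: adj_matrix_pow_entry funpow_add)
    also have "\<dots> = (\<Sum>j<n. (adj_matrix n E ^\<^sub>m k) $$ (i, j)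
        * (adj_op n E ^^ k) (\<lambda>l. of_bool (l = i)) j)"
      using i by (rule adj_op_pow_eq_mat)
    also have "\<dots> = (\<Sum>j<n. ((adj_matrix n E ^\<^sub>m k) $$ (i, j))\<^sup>2)"
      using i adj_matrix_pow_symmetric[OF assms i]
      by (intro sum.cong refl) (simp add: adj_matrix_pow_entry power2_eq_square)
    finally show ?thesis .
  qed
  then show ?thesis
    using adj_matrix_carrier[of n E] by (simp add: trace_mat_def)
qed

lemma sum_adj_eq_card_nbhd:
  assumes "finite T"
  shows "(\<Sum>j\<in>T. of_bool (E i j) :: real) = real (card (nbhd E i \<inter> T))"
  using assms by (simp add: nbhd_def Int_commute)

lemma nbhd_subset: "simple_graph n E \<Longrightarrow> nbhd E v \<subseteq> {..<n}"
  unfolding simple_graph_def nbhd_def by auto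

lemma adj_row_sum:
  assumes "simple_graph n E" and "regular n E d" and "i < n"
  shows "(\<Sum>j<n. of_bool (E i j) :: real) = real d"
  using assms sum_adj_eq_card_nbhd[of "{..<n}" E i] nbhd_subset[OF assms(1), of i]
  by (simp add: regular_def Int_absorb2)

lemma adj_matrix_pow_row_sum:
  assumes "simple_graph n E" and "regular n E d" and "i < n"
  shows "(\<Sum>j<n. (adj_matrix n E ^\<^sub>m k) $$ (i, j)) = real d ^ k"
proof -
  have "(adj_op n E ^^ k) (\<lambda>_. 1) i = real d ^ k" if "i < n" for i
    using that
  proof (induction k arbitrary: i)
    case (Suc k)
    then show ?case
      using adj_row_sum[OF assms(1,2) Suc.prems]
      by (simp add: adj_op_def sum_distrib_right[symmetric] del: sum_of_bool_mult_eq)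
  qed simp
  moreover have "(adj_op n E ^^ k) (\<lambda>_. 1) i = (\<Sum>j<n. (adj_matrix n E ^\<^sub>m k) $$ (i, j))"
    using adj_op_pow_eq_mat[OF assms(3), where E = E and k = k and x = "\<lambda>_. 1"] by simp
  ultimately show ?thesis
    using assms(3) by simp
qed

lemma adj_matrix_pow_centered_sq_sum:
  assumes sg: "simple_graph n E" and reg: "regular n E d" and n: "0 < n"
  shows "(\<Sum>i<n. \<Sum>j<n. ((adj_matrix n E ^\<^sub>m k) $$ (i, j) - real d ^ k / real n)\<^sup>2)
    = trace_mat (adj_matrix n E ^\<^sub>m (k + k)) - real d ^ (k + k)"
proof -
  let ?W = "adj_matrix n E ^\<^sub>m k"
  define c where "c = real d ^ k / real n"
  have cn: "c * real n = real d ^ k"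
    using n by (simp add: c_def)
  have "(\<Sum>i<n. \<Sum>j<n. (?W $$ (i, j) - c)\<^sup>2)
      = (\<Sum>i<n. \<Sum>j<n. (?W $$ (i, j))\<^sup>2) - 2 * c * (\<Sum>i<n. \<Sum>j<n. ?W $$ (i, j))
        + real n * real n * c\<^sup>2"
    by (simp add: power2_diff sum_subtractf sum.distrib sum_distrib_left mult_ac)
  also have "(\<Sum>i<n. \<Sum>j<n. (?W $$ (i, j))\<^sup>2) = trace_mat (adj_matrix n E ^\<^sub>m (k + k))"
    by (rule trace_adj_matrix_pow_double[OF sg, symmetric])
  also have "(\<Sum>i<n. \<Sum>j<n. ?W $$ (i, j)) = real n * real d ^ k"
    using adj_matrix_pow_row_sum[OF sg reg] by simp
  also have "2 * c * (real n * real d ^ k) = 2 * real d ^ (k + k)"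
    using cn by (simp add: power_add mult_ac)
  also have "real n * real n * c\<^sup>2 = real d ^ (k + k)"
    using cn by (simp add: power_add power2_eq_square mult_ac)
  finally show ?thesis
    by (simp add: c_def)
qed

text \<open>Since x is orthogonal to the constant vector, A^k x = (A^k - d^k J / n) x; Cauchy-Schwarz
  row by row bounds its norm by the Frobenius norm of A^k - d^k J / n.\<close>
lemma adj_op_pow_sq_le_trace:
  assumes sg: "simple_graph n E" and reg: "regular n E d" and n: "0 < n"
    and sum_zero: "(\<Sum>j<n. x j) = 0"
  shows "dot n ((adj_op n E ^^ k) x) ((adj_op n E ^^ k) x)
    \<le> (trace_mat (adj_matrix n E ^\<^sub>m (k + k)) - real d ^ (k + k)) * dot n x x"
proof -
  let ?W = "adj_matrix n E ^\<^sub>m k"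
  define c where "c = real d ^ k / real n"
  have centered: "(adj_op n E ^^ k) x i = (\<Sum>j<n. (?W $$ (i, j) - c) * x j)" if "i < n" for i
  proof -
    have "(adj_op n E ^^ k) x i = (\<Sum>j<n. ?W $$ (i, j) * x j) - c * (\<Sum>j<n. x j)"
      using that sum_zero by (simp add: adj_op_pow_eq_mat)
    then show ?thesis
      by (simp add: sum_distrib_left sum_subtractf left_diff_distrib)
  qed
  have "dot n ((adj_op n E ^^ k) x) ((adj_op n E ^^ k) x) = (\<Sum>i<n. ((adj_op n E ^^ k) x i)\<^sup>2)"
    by (simp add: dot_def power2_eq_square)
  also have "\<dots> \<le> (\<Sum>i<n. (\<Sum>j<n. (?W $$ (i, j) - c)\<^sup>2) * dot n x x)"
  proof (rule sum_mono)
    fix i assume "i \<in> {..<n}"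
    then show "((adj_op n E ^^ k) x i)\<^sup>2 \<le> (\<Sum>j<n. (?W $$ (i, j) - c)\<^sup>2) * dot n x x"
      using centered Cauchy_Schwarz_ineq_sum[of "\<lambda>j. ?W $$ (i, j) - c" x "{..<n}"]
      by (simp add: dot_def power2_eq_square)
  qed
  also have "\<dots> = (\<Sum>i<n. \<Sum>j<n. (?W $$ (i, j) - c)\<^sup>2) * dot n x x"
    by (simp add: sum_distrib_right)
  also have "\<dots> = (trace_mat (adj_matrix n E ^\<^sub>m (k + k)) - real d ^ (k + k)) * dot n x x"
    using adj_matrix_pow_centered_sq_sum[OF sg reg n] by (simp add: c_def)
  finally show ?thesis .
qed

lemma sum_centered_indicator:
  assumes "S \<subseteq> {..<n}" and "0 < n"
  shows "(\<Sum>i<n. of_bool (i \<in> S) - real (card S) / real n) = 0"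
  using assms by (simp add: sum_subtractf Int_absorb1)

lemma dot_centered_indicator:
  assumes S: "S \<subseteq> {..<n}" and n: "0 < n"
  defines "x \<equiv> \<lambda>i. of_bool (i \<in> S) - real (card S) / real n"
  shows "dot n x x = real (card S) - (real (card S))\<^sup>2 / real n"
proof -
  let ?s = "real (card S)"
  have "dot n x x = (\<Sum>i<n. of_bool (i \<in> S) * (1 - 2 * ?s / real n) + (?s / real n)\<^sup>2)"
    unfolding dot_def x_def by (intro sum.cong refl) (simp add: power2_eq_square algebra_simps)
  also have "\<dots> = ?s * (1 - 2 * ?s / real n) + real n * (?s / real n)\<^sup>2"
    using S by (simp add: sum.distrib Int_absorb1)
  also have "\<dots> = ?s - ?s\<^sup>2 / real n"
    using n by (simp add: power2_eq_square field_simps)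
  finally show ?thesis .
qed

lemma adj_op_centered_indicator:
  assumes sg: "simple_graph n E" and reg: "regular n E d" and T: "T \<subseteq> {..<n}" and i: "i < n"
  shows "adj_op n E (\<lambda>j. of_bool (j \<in> T) - real (card T) / real n) i
    = real (card (nbhd E i \<inter> T)) - real d * real (card T) / real n"
proof -
  have "adj_op n E (\<lambda>j. of_bool (j \<in> T) - real (card T) / real n) i
      = (\<Sum>j<n. of_bool (E i j) * of_bool (j \<in> T))
        - real (card T) / real n * (\<Sum>j<n. of_bool (E i j))"
    by (simp add: adj_op_def algebra_simps sum_subtractf sum_distrib_left
        del: sum_of_bool_eq sum_of_bool_mult_eq sum_mult_of_bool_eq)
  also have "(\<Sum>j<n. of_bool (E i j) * of_bool (j \<in> T)) = real (card (nbhd E i \<inter> T))"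
    using T by simp (intro arg_cong[where f = card], auto simp: nbhd_def)
  finally show ?thesis
    using adj_row_sum[OF sg reg i] by simp
qed

lemma sum_card_nbhd_inter:
  assumes sg: "simple_graph n E" and reg: "regular n E d" and T: "T \<subseteq> {..<n}"
  shows "(\<Sum>i<n. real (card (nbhd E i \<inter> T))) = real d * real (card T)"
proof -
  have sym: "E i j = E j i" for i j
    using sg unfolding simple_graph_def by blast
  have "(\<Sum>i<n. real (card (nbhd E i \<inter> T))) = (\<Sum>i<n. \<Sum>j\<in>T. of_bool (E j i))"
    using sum_adj_eq_card_nbhd[OF finite_subset[OF T]] by (simp add: sym del: sum_of_bool_eq)
  also have "\<dots> = (\<Sum>j\<in>T. real d)"
    using adj_row_sum[OF sg reg] T by (subst sum.swap) (intro sum.cong, auto)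
  finally show ?thesis
    by simp
qed

lemma dot_centered_indicator_adj_op:
  assumes sg: "simple_graph n E" and reg: "regular n E d" and n: "0 < n"
    and R: "R \<subseteq> {..<n}" and T: "T \<subseteq> {..<n}"
  defines "x \<equiv> \<lambda>i. of_bool (i \<in> R) - real (card R) / real n"
    and "y \<equiv> \<lambda>i. of_bool (i \<in> T) - real (card T) / real n"
  shows "dot n x (adj_op n E y)
    = (\<Sum>v\<in>R. real (card (nbhd E v \<inter> T))) - real d * real (card R) * real (card T) / real n"
proof -
  have adj_y: "adj_op n E y i = real (card (nbhd E i \<inter> T)) - real d * real (card T) / real n"
    if "i < n" for i
    unfolding y_def by (rule adj_op_centered_indicator[OF sg reg T that])
  have "(\<Sum>i<n. adj_op n E y i) = 0"
    using adj_y sum_card_nbhd_inter[OF sg reg T] n by (simp add: sum_subtractf)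
  then have "dot n x (adj_op n E y) = (\<Sum>i<n. of_bool (i \<in> R) * adj_op n E y i)"
    by (simp add: dot_def x_def left_diff_distrib sum_subtractf sum_distrib_left[symmetric]
        sum_divide_distrib[symmetric] del: sum_of_bool_mult_eq)
  also have "\<dots> = (\<Sum>i\<in>R. adj_op n E y i)"
    using R by (simp add: Int_absorb1)
  also have "\<dots> = (\<Sum>v\<in>R. real (card (nbhd E v \<inter> T)) - real d * real (card T) / real n)"
    using R adj_y by (intro sum.cong) auto
  finally show ?thesis
    by (simp add: sum_subtractf)
qed

section \<open>Spectral bounds for (n, d, lam)-graphs\<close>

locale ndl_spectrum =
  fixes n d :: nat and lam :: real and E :: "nat \<Rightarrow> nat \<Rightarrow> bool" and es :: "real list"
  assumes simple: "simple_graph n E" and regular: "regular n E d"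
    and eigenvalues: "eigenvalue_list (adj_matrix n E) es"
    and eigenvalues_le: "\<forall>i. 1 \<le> i \<and> i < length es \<longrightarrow> \<bar>es ! i\<bar> \<le> lam"
    and lam_less: "lam < real d" and n_pos: "0 < n"
begin

lemma char_poly_adj_matrix: "char_poly (adj_matrix n E) = (\<Prod>e\<leftarrow>es. [:- e, 1:])"
  using eigenvalues by (simp add: eigenvalue_list_def)

lemma length_eigenvalues: "length es = n"
  by (rule trace_pow_char_poly_roots(1)[OF adj_matrix_carrier char_poly_adj_matrix])

lemma first_eigenvalue: "es ! 0 = real d"
proof -
  let ?one = "vec n (\<lambda>_. 1) :: real vec"
  have "adj_matrix n E *\<^sub>v ?one = real d \<cdot>\<^sub>v ?one"
  proof (rule eq_vecI)
    fix i assume "i < dim_vec (real d \<cdot>\<^sub>v ?one)"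
    then have i: "i < n"
      by simp
    then show "(adj_matrix n E *\<^sub>v ?one) $ i = (real d \<cdot>\<^sub>v ?one) $ i"
      using adj_row_sum[OF simple regular i]
      by (simp add: adj_matrix_def scalar_prod_def atLeast0LessThan of_bool_def)
  qed (simp add: adj_matrix_def)
  moreover have "?one \<noteq> 0\<^sub>v n"
    using n_pos by (metis index_vec index_zero_vec(1) zero_neq_one)
  ultimately have "eigenvalue (adj_matrix n E) (real d)"
    unfolding eigenvalue_def eigenvector_def by (intro exI[of _ ?one]) (simp add: adj_matrix_def)
  then have "poly (char_poly (adj_matrix n E)) (real d) = 0"
    using eigenvalue_root_char_poly[OF adj_matrix_carrier] by blast
  then have "real d \<in> set es"
    unfolding char_poly_adj_matrix poly_prod_list by (auto simp: o_def prod_list_zero_iff)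
  then obtain j where j: "j < length es" "es ! j = real d"
    by (auto simp: in_set_conv_nth)
  have "j = 0"
  proof (rule ccontr)
    assume "j \<noteq> 0"
    then have "\<bar>es ! j\<bar> \<le> lam"
      using eigenvalues_le j(1) by simp
    then show False
      using j(2) lam_less by simp
  qed
  with j show ?thesis
    by simp
qed

lemma lam_nonneg:
  assumes "2 \<le> n"
  shows "0 \<le> lam"
proof -
  have "\<bar>es ! 1\<bar> \<le> lam"
    using assms eigenvalues_le length_eigenvalues by simp
  then show ?thesis
    by (rule order_trans[OF abs_ge_zero])
qed

lemma trace_adj_matrix_pow_double_le:
  "trace_mat (adj_matrix n E ^\<^sub>m (k + k)) - real d ^ (k + k) \<le> real (n - 1) * (lam\<^sup>2) ^ k"
proof -
  obtain m where m: "n = Suc m"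
    using n_pos by (cases n) auto
  have "trace_mat (adj_matrix n E ^\<^sub>m (k + k)) = (\<Sum>i<n. (es ! i) ^ (k + k))"
    by (rule trace_pow_char_poly_roots(2)[OF adj_matrix_carrier char_poly_adj_matrix])
  also have "\<dots> = real d ^ (k + k) + (\<Sum>i<m. (es ! Suc i) ^ (k + k))"
    unfolding m sum.lessThan_Suc_shift using first_eigenvalue by simp
  also have "(\<Sum>i<m. (es ! Suc i) ^ (k + k)) \<le> (\<Sum>i<m. (lam\<^sup>2) ^ k)"
  proof (rule sum_mono)
    fix i assume "i \<in> {..<m}"
    then have "\<bar>es ! Suc i\<bar> \<le> lam"
      using eigenvalues_le length_eigenvalues m by auto
    then have "(es ! Suc i)\<^sup>2 \<le> lam\<^sup>2"
      by (metis abs_ge_zero order_trans power2_abs power_mono)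
    then have "((es ! Suc i)\<^sup>2) ^ k \<le> (lam\<^sup>2) ^ k"
      by (rule power_mono) simp
    then show "(es ! Suc i) ^ (k + k) \<le> (lam\<^sup>2) ^ k"
      by (simp add: power_mult[symmetric] mult_2[symmetric])
  qed
  finally show ?thesis
    using m by simp
qed

text \<open>The sequence N j = |A^j x|^2 is log-convex and at most (n - 1) lam^(2j) |x|^2, which
  forces N 1 \<le> lam^2 N 0; this replaces the spectral theorem.\<close>
lemma adj_op_sq_le:
  assumes sum_zero: "(\<Sum>j<n. x j) = 0"
  shows "dot n (adj_op n E x) (adj_op n E x) \<le> lam\<^sup>2 * dot n x x"
proof -
  define N where "N j = dot n ((adj_op n E ^^ j) x) ((adj_op n E ^^ j) x)" for j
  have nonneg: "0 \<le> N j" for j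
    by (simp add: N_def dot_self_nonneg)
  have log_convex: "(N (Suc j))\<^sup>2 \<le> N j * N (Suc (Suc j))" for j
  proof -
    let ?z = "(adj_op n E ^^ j) x"
    have "N (Suc j) = dot n ?z ((adj_op n E ^^ Suc (Suc j)) x)"
      by (simp add: N_def adj_op_symmetric[OF simple])
    then show ?thesis
      using dot_Cauchy_Schwarz[of n ?z] by (simp add: N_def)
  qed
  have bound: "N j \<le> real (n - 1) * (lam\<^sup>2) ^ j * N 0" for j
  proof -
    have "N j \<le> (trace_mat (adj_matrix n E ^\<^sub>m (j + j)) - real d ^ (j + j)) * dot n x x"
      unfolding N_def by (rule adj_op_pow_sq_le_trace[OF simple regular n_pos sum_zero])
    also have "\<dots> \<le> real (n - 1) * (lam\<^sup>2) ^ j * dot n x x"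
      using trace_adj_matrix_pow_double_le dot_self_nonneg by (intro mult_right_mono) auto
    finally show ?thesis
      by (simp add: N_def)
  qed
  have "N 1 \<le> lam\<^sup>2 * N 0"
    by (rule log_convex_geometric_bound[of N, OF nonneg log_convex _ bound]) simp
  then show ?thesis
    by (simp add: N_def)
qed

lemma expander_mixing:
  assumes R: "R \<subseteq> {..<n}" and T: "T \<subseteq> {..<n}"
  shows "((\<Sum>v\<in>R. real (card (nbhd E v \<inter> T))) - real d * real (card R) * real (card T) / real n)\<^sup>2
    \<le> lam\<^sup>2 * (real (card R) - (real (card R))\<^sup>2 / real n)
        * (real (card T) - (real (card T))\<^sup>2 / real n)"
proof -
  define x where "x = (\<lambda>i. of_bool (i \<in> R) - real (card R) / real n)"
  define y where "y = (\<lambda>i. of_bool (i \<in> T) - real (card T) / real n)"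
  have "((\<Sum>v\<in>R. real (card (nbhd E v \<inter> T))) - real d * real (card R) * real (card T) / real n)\<^sup>2
      = (dot n x (adj_op n E y))\<^sup>2"
    unfolding x_def y_def by (simp add: dot_centered_indicator_adj_op[OF simple regular n_pos R T])
  also have "\<dots> \<le> dot n x x * dot n (adj_op n E y) (adj_op n E y)"
    by (rule dot_Cauchy_Schwarz)
  also have "\<dots> \<le> dot n x x * (lam\<^sup>2 * dot n y y)"
    using adj_op_sq_le[of y] sum_centered_indicator[OF T n_pos] dot_self_nonneg[of n x]
    by (intro mult_left_mono) (auto simp: y_def)
  also have "\<dots> = lam\<^sup>2 * (real (card R) - (real (card R))\<^sup>2 / real n)
        * (real (card T) - (real (card T))\<^sup>2 / real n)"
    using dot_centered_indicator[OF R n_pos] dot_centered_indicator[OF T n_pos]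
    by (simp add: x_def y_def mult_ac)
  finally show ?thesis .
qed

lemma expander_mixing_le:
  assumes R: "R \<subseteq> {..<n}" and T: "T \<subseteq> {..<n}"
  shows "((\<Sum>v\<in>R. real (card (nbhd E v \<inter> T))) - real d * real (card R) * real (card T) / real n)\<^sup>2
    \<le> lam\<^sup>2 * real (card R) * real (card T)"
proof -
  let ?shrink = "\<lambda>S. real (card S) - (real (card S))\<^sup>2 / real n"
  have shrink: "0 \<le> ?shrink S" "?shrink S \<le> real (card S)" if "S \<subseteq> {..<n}" for S
  proof -
    have "card S \<le> n"
      using card_mono[OF _ that] by simp
    then have "(real (card S))\<^sup>2 \<le> real (card S) * real n"
      by (simp add: power2_eq_square mult_left_mono)
    then show "0 \<le> ?shrink S"
      using n_pos by (simp add: pos_divide_le_eq)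
    show "?shrink S \<le> real (card S)"
      by simp
  qed
  have "?shrink R * ?shrink T \<le> real (card R) * real (card T)"
    using shrink[OF R] shrink[OF T] by (intro mult_mono) auto
  then have "lam\<^sup>2 * ?shrink R * ?shrink T \<le> lam\<^sup>2 * real (card R) * real (card T)"
    unfolding mult.assoc by (intro mult_left_mono) auto
  with expander_mixing[OF R T] show ?thesis
    by linarith
qed

lemma adj_matrix_pow_one: "adj_matrix n E ^\<^sub>m 1 = adj_matrix n E"
  using adj_matrix_carrier[of n E] by simp

text \<open>tr A^2 counts the n d ordered edges and equals d^2 plus the sum of the other squared
  eigenvalues.\<close>
lemma lam_sq_lower_bound: "real d * (real n - real d) \<le> lam\<^sup>2 * (real n - 1)"
proof -
  have "trace_mat (adj_matrix n E ^\<^sub>m (1 + 1)) = (\<Sum>i<n. \<Sum>j<n. ((adj_matrix n E) $$ (i, j))\<^sup>2)"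
    using trace_adj_matrix_pow_double[OF simple, of 1] by (simp add: adj_matrix_pow_one)
  also have "\<dots> = (\<Sum>i<n. \<Sum>j<n. of_bool (E i j))"
    by (intro sum.cong refl) (simp add: adj_matrix_def)
  also have "\<dots> = real n * real d"
    using adj_row_sum[OF simple regular] by simp
  finally have "real n * real d - real d ^ 2 \<le> real (n - 1) * lam\<^sup>2"
    using trace_adj_matrix_pow_double_le[of 1] by (simp add: numeral_2_eq_2)
  then show ?thesis
    using n_pos by (simp add: of_nat_diff algebra_simps power2_eq_square)
qed

end

section \<open>Interiors of subpaths\<close>

lemma card_nbhd_inter_ge:
  assumes "simple_graph n E" and "regular n E d" and v: "v < n"
    and T: "T \<subseteq> {..<n}" and "v \<notin> T"
  shows "real (card T) - (real n - 1 - real d) \<le> real (card (nbhd E v \<inter> T))"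
proof -
  have N: "nbhd E v \<subseteq> {..<n} - {v}"
    using assms(1) unfolding simple_graph_def nbhd_def by auto
  have "d \<le> n - 1"
    using card_mono[OF _ N] assms(2) v by (simp add: regular_def)
  have "T = (nbhd E v \<inter> T) \<union> (T - nbhd E v)"
    by blast
  then have "card T \<le> card (nbhd E v \<inter> T) + card (T - nbhd E v)"
    by (metis card_Un_le)
  also have "card (T - nbhd E v) \<le> card ({..<n} - {v} - nbhd E v)"
    using T \<open>v \<notin> T\<close> by (intro card_mono) auto
  also have "\<dots> = n - 1 - d"
    using card_Diff_subset[OF finite_subset[OF N] N] assms(2) v by (simp add: regular_def)
  finally show ?thesis
    using \<open>d \<le> n - 1\<close> v by (simp add: of_nat_diff)
qed

lemma int_path_mono: "X \<subseteq> Y \<Longrightarrow> int_path P X \<subseteq> int_path P Y"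
  unfolding int_path_def by blast

lemma int_path_subset: "int_path P X \<subseteq> X"
  unfolding int_path_def by blast

lemma nth_mem_int_path:
  assumes "0 < i" and "i + 1 < length P" and "P ! (i - 1) \<in> S" and "P ! i \<in> S" and "P ! (i + 1) \<in> S"
  shows "P ! i \<in> int_path P S"
  using assms unfolding int_path_def by blast

lemma card_image_Suc_pred_le:
  fixes D :: "nat set"
  assumes "finite D"
  shows "card (D \<union> Suc ` D \<union> (\<lambda>i. i - 1) ` D) \<le> 3 * card D"
proof -
  have "card (D \<union> Suc ` D \<union> (\<lambda>i. i - 1) ` D)
      \<le> card D + card (Suc ` D) + card ((\<lambda>i. i - 1) ` D)"
    by (meson card_Un_le add_right_mono order_trans)
  also have "\<dots> \<le> 3 * card D"
    using card_image_le[OF assms, of Suc] card_image_le[OF assms, of "\<lambda>i. i - 1"] by linarith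
  finally show ?thesis .
qed

lemma set_sublist_eq_nth_image:
  assumes "P = xs @ A @ ys"
  shows "set A = (!) P ` {length xs..<length xs + length A}"
proof -
  have shift: "{length xs..<length xs + length A} = plus (length xs) ` {0..<length A}"
    by (simp add: add.commute)
  have "(!) P ` {length xs..<length xs + length A} = (\<lambda>j. P ! (length xs + j)) ` {0..<length A}"
    unfolding shift image_image ..
  also have "\<dots> = (!) A ` {0..<length A}"
    using assms by (intro image_cong) (auto simp: nth_append)
  finally show ?thesis
    by (simp add: nth_image)
qed

text \<open>Each vertex of A outside S spoils at most three interior positions, namely its own and
  those of its two neighbours on the path; besides, the two ends of A are never interior.\<close>
lemma card_int_path_sublist:
  assumes "distinct P" and P: "P = xs @ A @ ys" and S: "S \<subseteq> set A"
  shows "length A \<le> card (int_path P S) + 3 * card (set A - S) + 2"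
proof -
  define p where "p = length xs"
  define I where "I = {p..<p + length A}"
  have A_eq: "set A = (!) P ` I"
    unfolding I_def p_def by (rule set_sublist_eq_nth_image[OF P])
  have inj: "inj_on ((!) P) {..<length P}"
    using assms(1) by (simp add: inj_on_nth)
  have I_sub: "I \<subseteq> {..<length P}"
    using P by (auto simp: I_def p_def)
  define D where "D = {i \<in> I. P ! i \<notin> S}"
  have "D \<subseteq> {..<length P}"
    using I_sub by (auto simp: D_def)
  moreover have "(!) P ` D = set A - S"
    using A_eq by (auto simp: D_def)
  ultimately have card_D: "card D = card (set A - S)"
    using card_image[OF inj_on_subset[OF inj]] by metis
  have fin_D: "finite D"
    by (simp add: D_def I_def)
  define B where "B = D \<union> Suc ` D \<union> (\<lambda>i. i - 1) ` D"
  have card_B: "card B \<le> 3 * card D"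
    unfolding B_def by (rule card_image_Suc_pred_le[OF fin_D])
  define G where "G = {p + 1..<p + length A - 1} - B"
  have in_S: "P ! i \<in> S" if "i \<in> I" and "i \<notin> D" for i
    using that A_eq by (auto simp: D_def)
  have G_int: "(!) P ` G \<subseteq> int_path P S"
  proof
    fix v assume "v \<in> (!) P ` G"
    then obtain i where i: "p + 1 \<le> i" "i < p + length A - 1" "i \<notin> B" and v: "v = P ! i"
      by (auto simp: G_def)
    have "i - 1 \<notin> D" "i \<notin> D" "i + 1 \<notin> D"
      using i(1,3) image_eqI[of i Suc "i - 1" D] image_eqI[of i "\<lambda>i. i - 1" "i + 1" D]
      by (auto simp: B_def)
    moreover have "i - 1 \<in> I" "i \<in> I" "i + 1 \<in> I"
      using i by (auto simp: I_def)
    ultimately show "v \<in> int_path P S"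
      unfolding v using i P in_S by (intro nth_mem_int_path) (auto simp: p_def)
  qed
  have "G \<subseteq> {..<length P}"
    using P by (auto simp: G_def p_def)
  moreover have "finite (int_path P S)"
    using int_path_subset[of P S] S by (meson List.finite_set finite_subset subset_trans)
  ultimately have "card G \<le> card (int_path P S)"
    using card_inj_on_le[OF inj_on_subset[OF inj] G_int] by blast
  moreover have "card {p + 1..<p + length A - 1} - card B \<le> card G"
    unfolding G_def by (rule diff_card_le_card_Diff) (simp add: B_def fin_D)
  ultimately show ?thesis
    using card_B card_D by simp
qed

section \<open>The deletion process\<close>

text \<open>Here a = |A| and D = d / n; the k deleted vertices have e < D k a / 4 edges into the
  interior, of size t, of the remaining set, and the mixing lemma says |e - D k t| \<le> lam sqrt(k t).\<close>
lemma large_subpath_arith: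
  fixes a k t e D lam :: real
  assumes "39 \<le> a" and "a < 10 * k" and "10 * k \<le> a + 10" and "a \<le> t + 3 * k + 2" and "t \<le> a"
    and "0 < D" and "0 \<le> lam" and "lam \<le> D * a / 10"
    and "e < D * k * a / 4" and "(e - D * k * t)\<^sup>2 \<le> lam\<^sup>2 * k * t"
  shows False
proof -
  define u where "u = t - a / 4"
  have k_pos: "0 < k"
    using assms(1,2) by simp
  have u_ge: "8 / 25 * a \<le> u"
    using assms(1,3,4) unfolding u_def by linarith
  then have u_nonneg: "0 \<le> u" and t_nonneg: "0 \<le> t"
    using assms(1) by (simp_all add: u_def)
  have "D * k * u < D * k * t - e"
    using assms(9) by (simp add: u_def algebra_simps)
  then have "(D * k * u)\<^sup>2 < (D * k * t - e)\<^sup>2"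
    using assms(6) k_pos u_nonneg by (intro power_strict_mono) auto
  also have "\<dots> \<le> lam\<^sup>2 * k * t"
    using assms(10) by (simp add: power2_commute)
  also have "\<dots> \<le> (D * a / 10)\<^sup>2 * k * a"
  proof -
    have "lam\<^sup>2 * k \<le> (D * a / 10)\<^sup>2 * k"
      using assms(7,8) k_pos by (intro mult_right_mono power_mono) auto
    moreover have "0 \<le> (D * a / 10)\<^sup>2 * k"
      using k_pos by simp
    ultimately show ?thesis
      using mult_mono assms(5) t_nonneg by blast
  qed
  also have "\<dots> = (D\<^sup>2 * k) * (a ^ 3) / 100"
    by (simp add: power_mult_distrib power_divide power2_eq_square power3_eq_cube)
  also have "(D * k * u)\<^sup>2 = (D\<^sup>2 * k) * (k * u\<^sup>2)"
    by (simp add: power_mult_distrib power2_eq_square)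
  finally have "100 * k * u\<^sup>2 < a ^ 3"
    using assms(6) k_pos by (simp add: mult_less_cancel_left_pos less_divide_eq)
  moreover have "10 * a * u\<^sup>2 \<le> 100 * k * u\<^sup>2"
    using assms(2) by (intro mult_right_mono) auto
  ultimately have "a * (10 * u\<^sup>2) < a * a\<^sup>2"
    by (simp add: power2_eq_square power3_eq_cube mult_ac)
  then have "10 * u\<^sup>2 < a\<^sup>2"
    using assms(1) by (simp add: mult_less_cancel_left_pos)
  moreover have "(8 / 25 * a)\<^sup>2 \<le> u\<^sup>2"
    using u_ge assms(1) by (intro power_mono) auto
  ultimately show False
    using zero_le_power2[of a] by (simp add: power_mult_distrib power_divide)
qed

lemma small_subpath_arith:
  fixes a k :: nat
  assumes "11 \<le> a" and "a < 39" and "a < 10 * k" and "10 * k \<le> a + 10"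
    and "75 * real a < 300 * real k + 100 + (real a)\<^sup>2"
  shows False
proof -
  have "a < 20 \<and> k = 2 \<or> 20 \<le> a \<and> a < 30 \<and> k = 3 \<or> 30 \<le> a \<and> k = 4"
    using assms(1-4) by presburger
  then consider "a < 20" "k = 2" | "20 \<le> a" "a < 30" "k = 3" | "30 \<le> a" "k = 4"
    by blast
  then show False
  proof cases
    case 1
    then have "0 \<le> (real a - 11) * (64 - real a)"
      using assms(1) by simp
    then show False
      using 1 assms(5) by (simp add: algebra_simps power2_eq_square)
  next
    case 2
    then have "0 \<le> (real a - 20) * (55 - real a)"
      by simp
    then show False
      using 2 assms(5) by (simp add: algebra_simps power2_eq_square)
  next
    case 3
    then have "0 \<le> (real a - 30) * (45 - real a)"
      using assms(2) by simp
    then show False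
      using 3 assms(5) by (simp add: algebra_simps power2_eq_square)
  qed
qed

locale ndl_subpath =
  fixes n d :: nat and lam :: real and E :: "nat \<Rightarrow> nat \<Rightarrow> bool" and P A xs ys :: "nat list"
  assumes ndl: "ndl_graph n d lam E" and path: "is_path n E P"
    and P_eq: "P = xs @ A @ ys" and A_ne: "A \<noteq> []" and d_pos: "0 < d"
    and A_long: "10 * lam * real n \<le> real (length A) * real d"
begin

abbreviation a :: nat where "a \<equiv> length A"

lemma simple: "simple_graph n E" and regular: "regular n E d"
  using ndl by (simp_all add: ndl_graph_def)

lemma distinct_A: "distinct A"
  using path P_eq by (simp add: is_path_def)

lemma card_set_A: "card (set A) = a"
  using distinct_A by (rule distinct_card)

lemma set_A_subset: "set A \<subseteq> {..<n}"
  using path P_eq by (auto simp: is_path_def)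

lemma a_le_n: "a \<le> n"
  using card_mono[OF _ set_A_subset] card_set_A by simp

lemma n_pos: "0 < n"
  using a_le_n A_ne by (cases A) auto

lemma d_less_n: "d < n"
proof -
  have "nbhd E 0 \<subseteq> {..<n} - {0}"
    using simple unfolding simple_graph_def nbhd_def by auto
  then have "d \<le> n - 1"
    using card_mono[of "{..<n} - {0}" "nbhd E 0"] regular n_pos by (simp add: regular_def)
  then show ?thesis
    using n_pos by simp
qed

lemma lam_le: "lam \<le> real d * real a / (10 * real n)"
  using A_long n_pos by (simp add: field_simps)

lemma lam_less_d: "lam < real d"
proof -
  have "real d * real a / (10 * real n) \<le> real d / 10"
    using a_le_n n_pos by (simp add: field_simps mult_left_mono)
  then show ?thesis
    using lam_le d_pos by linarith
qed

lemma spectrum: obtains es where "ndl_spectrum n d lam E es"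
  using ndl lam_less_d n_pos unfolding ndl_graph_def ndl_spectrum_def by blast

lemma lam_nonneg: "0 \<le> lam"
proof -
  obtain es where "ndl_spectrum n d lam E es"
    by (rule spectrum)
  then show ?thesis
    using d_pos d_less_n by (intro ndl_spectrum.lam_nonneg) auto
qed

lemma n_minus_d_less: "100 * (real n - real d) < (real a)\<^sup>2"
proof -
  obtain es where "ndl_spectrum n d lam E es"
    by (rule spectrum)
  then have "real d * (real n - real d) \<le> lam\<^sup>2 * (real n - 1)"
    by (rule ndl_spectrum.lam_sq_lower_bound)
  also have "\<dots> \<le> (real d * real a / (10 * real n))\<^sup>2 * (real n - 1)"
    using lam_le lam_nonneg n_pos by (intro mult_right_mono power_mono) auto
  also have "\<dots> = real d * (real d * (real n - 1) * (real a)\<^sup>2) / (100 * (real n)\<^sup>2)"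
    by (simp add: power_divide power_mult_distrib power2_eq_square)
  finally have "real d * (real n - real d) * (100 * (real n)\<^sup>2)
      \<le> real d * (real d * (real n - 1) * (real a)\<^sup>2)"
    using n_pos by (simp add: le_divide_eq)
  then have "real d * (100 * (real n)\<^sup>2 * (real n - real d))
      \<le> real d * (real d * (real n - 1) * (real a)\<^sup>2)"
    by (simp only: mult_ac)
  then have "100 * (real n)\<^sup>2 * (real n - real d) \<le> real d * (real n - 1) * (real a)\<^sup>2"
    using d_pos by (simp add: mult_le_cancel_left_pos)
  also have "\<dots> < (real n)\<^sup>2 * (real a)\<^sup>2"
  proof (rule mult_strict_right_mono)
    show "real d * (real n - 1) < (real n)\<^sup>2"
      using d_less_n n_pos by (simp add: power2_eq_square mult_strict_mono')
    show "0 < (real a)\<^sup>2"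
      using A_ne by simp
  qed
  finally show ?thesis
    using n_pos by (simp add: mult.commute)
qed

lemma a_ge_11: "11 \<le> a"
proof -
  have "100 \<le> 100 * (real n - real d)"
    using d_less_n by simp
  then have "10\<^sup>2 < (real a)\<^sup>2"
    using n_minus_d_less by simp
  then have "10 < real a"
    by (rule power_less_imp_less_base) simp
  then show ?thesis
    by simp
qed

text \<open>The invariant of the greedy deletion: the vertices deleted from A so far have few neighbours
  in the current interior. It persists because interiors shrink together with S.\<close>
definition deleted_sparse :: "nat set \<Rightarrow> bool" where
  "deleted_sparse S \<longleftrightarrow>
     (\<forall>v\<in>set A - S. real (card (nbhd E v \<inter> int_path P S)) < real d * real a / (4 * real n))"

lemma deleted_sparse_remove:
  assumes S: "S \<subseteq> set A" and sparse: "deleted_sparse S" and v: "v \<in> S"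
    and few: "real (card (nbhd E v \<inter> int_path P S)) < real d * real (card S) / (4 * real n)"
  shows "deleted_sparse (S - {v})"
  unfolding deleted_sparse_def
proof
  fix u assume u: "u \<in> set A - (S - {v})"
  have "int_path P (S - {v}) \<subseteq> int_path P S"
    by (rule int_path_mono) blast
  then have "card (nbhd E u \<inter> int_path P (S - {v})) \<le> card (nbhd E u \<inter> int_path P S)"
    using int_path_subset[of P S] S by (intro card_mono) (auto intro: finite_subset)
  moreover have "real (card (nbhd E u \<inter> int_path P S)) < real d * real a / (4 * real n)"
  proof (cases "u = v")
    case True
    have "real (card S) \<le> real a"
      using card_mono[OF _ S] card_set_A by simp
    then have "real d * real (card S) / (4 * real n) \<le> real d * real a / (4 * real n)"
      by (intro divide_right_mono mult_left_mono) auto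
    with few show ?thesis
      unfolding True by linarith
  next
    case False
    with u sparse show ?thesis
      by (simp add: deleted_sparse_def)
  qed
  ultimately show "real (card (nbhd E u \<inter> int_path P (S - {v}))) < real d * real a / (4 * real n)"
    by linarith
qed

lemma edges_deleted_interior_less:
  assumes "deleted_sparse S" and "set A - S \<noteq> {}"
  shows "(\<Sum>v\<in>set A - S. real (card (nbhd E v \<inter> int_path P S)))
    < real (card (set A - S)) * (real d * real a / (4 * real n))"
proof -
  have "(\<Sum>v\<in>set A - S. real (card (nbhd E v \<inter> int_path P S)))
      < (\<Sum>v\<in>set A - S. real d * real a / (4 * real n))"
    using assms by (intro sum_strict_mono) (auto simp: deleted_sparse_def)
  then show ?thesis
    by simp
qed

lemma card_int_path_A:
  assumes "S \<subseteq> set A"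
  shows "a \<le> card (int_path P S) + 3 * card (set A - S) + 2" and "card (int_path P S) \<le> a"
proof -
  show "a \<le> card (int_path P S) + 3 * card (set A - S) + 2"
    using path P_eq assms by (intro card_int_path_sublist) (auto simp: is_path_def)
  show "card (int_path P S) \<le> a"
    using card_mono[OF _ order_trans[OF int_path_subset assms]] card_set_A by simp
qed

lemma deleted_sparse_large:
  assumes S: "S \<subseteq> set A" and sparse: "deleted_sparse S" and "39 \<le> a"
    and k_bounds: "a < 10 * card (set A - S)" "10 * card (set A - S) \<le> a + 10"
  shows False
proof -
  define R where "R = set A - S"
  define T where "T = int_path P S"
  define e where "e = (\<Sum>v\<in>R. real (card (nbhd E v \<inter> T)))"
  have R_sub: "R \<subseteq> {..<n}" and T_sub: "T \<subseteq> {..<n}"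
    using set_A_subset S int_path_subset[of P S] by (auto simp: R_def T_def)
  obtain es where "ndl_spectrum n d lam E es"
    by (rule spectrum)
  from ndl_spectrum.expander_mixing_le[OF this R_sub T_sub]
  have mixing: "(e - real d / real n * real (card R) * real (card T))\<^sup>2
      \<le> lam\<^sup>2 * real (card R) * real (card T)"
    by (simp add: e_def)
  have "0 < card R"
    using k_bounds(1) unfolding R_def by linarith
  then have "R \<noteq> {}"
    by auto
  then have "e < real (card R) * (real d * real a / (4 * real n))"
    using edges_deleted_interior_less[OF sparse] by (simp add: e_def R_def T_def)
  then have e_less: "e < real d / real n * real (card R) * real a / 4"
    by (simp add: mult_ac)
  have lam_le': "lam \<le> real d / real n * real a / 10"
    using lam_le by simp
  have a_ge: "39 \<le> real a" and D_pos: "0 < real d / real n"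
    and k_bounds': "real a < 10 * real (card R)" "10 * real (card R) \<le> real a + 10"
    using \<open>39 \<le> a\<close> k_bounds d_pos n_pos by (simp_all add: R_def)
  have t: "real a \<le> real (card T) + 3 * real (card R) + 2" "real (card T) \<le> real a"
    using card_int_path_A[OF S] by (simp_all add: T_def R_def)
  show False
    by (rule large_subpath_arith[OF a_ge k_bounds' t D_pos lam_nonneg lam_le' e_less mixing])
qed

lemma deleted_sparse_small:
  assumes S: "S \<subseteq> set A" and sparse: "deleted_sparse S" and "a < 39"
    and k_bounds: "a < 10 * card (set A - S)" "10 * card (set A - S) \<le> a + 10"
  shows False
proof -
  define R where "R = set A - S"
  define T where "T = int_path P S"
  define e where "e = (\<Sum>v\<in>R. real (card (nbhd E v \<inter> T)))"
  have R_sub: "R \<subseteq> {..<n}" and T_sub: "T \<subseteq> {..<n}" and disjoint: "R \<inter> T = {}"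
    using set_A_subset S int_path_subset[of P S] by (auto simp: R_def T_def)
  have "(\<Sum>v\<in>R. real (card T) - (real n - 1 - real d)) \<le> e"
    unfolding e_def using R_sub disjoint
    by (intro sum_mono card_nbhd_inter_ge[OF simple regular _ T_sub]) auto
  then have e_ge: "real (card R) * (real (card T) - (real n - 1 - real d)) \<le> e"
    by simp
  have "0 < card R"
    using k_bounds(1) unfolding R_def by linarith
  then have "R \<noteq> {}"
    by auto
  then have "e < real (card R) * (real d * real a / (4 * real n))"
    using edges_deleted_interior_less[OF sparse] by (simp add: e_def R_def T_def)
  also have "\<dots> \<le> real (card R) * (real a / 4)"
    using d_less_n n_pos by (intro mult_left_mono) (simp_all add: field_simps mult_right_mono)
  finally have "real (card R) * (real (card T) - (real n - 1 - real d)) < real (card R) * (real a / 4)"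
    using e_ge by linarith
  then have "real (card T) - (real n - 1 - real d) < real a / 4"
    using \<open>0 < card R\<close> by (simp add: mult_less_cancel_left_pos)
  moreover have "real a \<le> real (card T) + 3 * real (card R) + 2"
    using card_int_path_A(1)[OF S] by (simp add: T_def R_def)
  moreover have "100 * real n - 100 * real d < (real a)\<^sup>2"
    using n_minus_d_less by (simp add: right_diff_distrib)
  ultimately have "75 * real a < 300 * real (card R) + 100 + (real a)\<^sup>2"
    by linarith
  then show False
    by (rule small_subpath_arith[OF a_ge_11 \<open>a < 39\<close> k_bounds[folded R_def]])
qed

lemma deleted_sparse_card_le:
  assumes "S \<subseteq> set A" and "deleted_sparse S" and "10 * card (set A - S) \<le> a + 10"
  shows "10 * card (set A - S) \<le> a"
proof (rule ccontr)
  assume "\<not> ?thesis"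
  then have "a < 10 * card (set A - S)"
    by simp
  then show False
    using deleted_sparse_large[OF assms(1,2) _ _ assms(3)] deleted_sparse_small[OF assms(1,2) _ _ assms(3)]
    by fastforce
qed

lemma clean_subset_of_deleted_sparse:
  assumes "S \<subseteq> set A" and "deleted_sparse S" and "10 * card (set A - S) \<le> a"
  shows "\<exists>A'. A' \<subseteq> set A \<and> clean n d E P A' \<and> real (card A') \<ge> 0.9 * real a"
  using assms
proof (induction "card S" arbitrary: S rule: less_induct)
  case less
  have S_fin: "finite S"
    using less.prems(1) finite_subset by blast
  have card_S: "card S + card (set A - S) = a"
    using card_Diff_subset[OF S_fin less.prems(1)] card_mono[OF _ less.prems(1)] card_set_A by simp
  show ?case
  proof (cases "clean n d E P S")
    case True
    have "0.9 * real a \<le> real (card S)"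
      using card_S less.prems(3) by linarith
    with True less.prems(1) show ?thesis
      by blast
  next
    case False
    have "S \<subseteq> set P"
      using less.prems(1) P_eq by auto
    with False obtain v where v: "v \<in> S"
      and few: "real (card (nbhd E v \<inter> int_path P S)) < real d * real (card S) / (4 * real n)"
      unfolding clean_def clean_delta_def by (auto simp: not_le)
    have sparse: "deleted_sparse (S - {v})"
      by (rule deleted_sparse_remove[OF less.prems(1,2) v few])
    have "set A - (S - {v}) = insert v (set A - S)"
      using v less.prems(1) by auto
    then have "card (set A - (S - {v})) = Suc (card (set A - S))"
      using v by simp
    then have "10 * card (set A - (S - {v})) \<le> a"
      using deleted_sparse_card_le[of "S - {v}"] sparse less.prems(1,3) by auto
    moreover have "card (S - {v}) < card S"
      by (rule card_Diff1_less[OF S_fin v])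
    ultimately show ?thesis
      using less.hyps[of "S - {v}"] sparse less.prems(1) by blast
  qed
qed

lemma clean_subset_exists:
  "\<exists>A'. A' \<subseteq> set A \<and> clean n d E P A' \<and> real (card A') \<ge> 0.9 * real a"
  by (rule clean_subset_of_deleted_sparse[of "set A"]) (auto simp: deleted_sparse_def)

end

theorem lemma4p5:
  fixes n d :: nat and lam :: real and E :: "nat \<Rightarrow> nat \<Rightarrow> bool" and P A :: "nat list"
  assumes "ndl_graph n d lam E"
    and "is_path n E P"
    and "subpath A P"
    and "real (length A) \<ge> 10 * lam * real n / real d"
  shows "\<exists>A'. A' \<subseteq> set A \<and> clean n d E P A' \<and> real (card A') \<ge> 0.9 * real (length A)"
proof -
  obtain xs ys where P_eq: "P = xs @ A @ ys" and A_ne: "A \<noteq> []"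
    using assms(3) unfolding subpath_def by blast
  show ?thesis
  proof (cases "d = 0")
    case True
    \<comment> \<open>the length hypothesis is void (x / 0 = 0), but the cleanliness threshold is 0 too\<close>
    then have "clean n d E P (set A)"
      using P_eq by (auto simp: clean_def clean_delta_def)
    moreover have "card (set A) = length A"
      using assms(2) P_eq by (simp add: is_path_def distinct_card)
    ultimately show ?thesis
      by force
  next
    case False
    with assms P_eq A_ne interpret ndl_subpath n d lam E P A xs ys
      by unfold_locales (auto simp: pos_divide_le_eq)
    show ?thesis
      by (rule clean_subset_exists)
  qed
qed

end
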